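(* Let $Q$ be a countable weak-latin quandle and $<$ a right order on $Q$. If $\rho$ and $\rho'$ are dynamical realizations of $<$ constructed from two enumerations of $Q$, then they are topologically conjugate by an orientation-preserving homeomorphism of $\mathbb{R}$. Consequently the realization map $R:RQ(Q)\to\mathrm{Hom}(Q,\mathrm{Conj}(\mathrm{Homeo}_+(\mathbb{R})))/\!\sim$ is well defined up to topological conjugacy.
   Context: Quandle: set $Q$ with operation $*$ satisfying $q*q=q$, unique right division, and $(q*r)*s=(q*s)*(r*s)$. Weak-latin: for any $q,r$ there is $\hat q$ with $\hat q*q=\hat q*r\Rightarrow q=r$. Right order: total order with $q_1<q_2\Rightarrow q_1*q<q_2*q$; $RQ(Q)$ is the set of right orders. Homeomorphisms act on the right; $\mathrm{Hom}(Q,\mathrm{Conj}(\mathrm{Homeo}_+(\mathbb{R})))$ is the set of $\rho$ with $\rho(r*s)=\rho(s)\circ\rho(r)\circ\rho(s)^{-1}$; $\sim$ is topological conjugacy. Dynamical realization from an enumeration $(q_i)$: $\iota:Q\to\mathbb{R}$ with $\iota(q_1)$ arbitrary; if $q_n$ is below all of $q_1,\dots,q_{n-1}$ then $\iota(q_n)$ is their minimal $\iota$-value minus $1$, if above all then their maximal $\iota$-value plus $1$, otherwise the midpoint of the $\iota$-values of its immediate neighbours among them; then $\rho(q)(\iota(r))=\iota(r*q)$ on $\iota(Q)$, extended continuously to the closure and affinely on complementary intervals. *)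

theory Defs
  imports "HOL-Analysis.Analysis"
begin

text \<open>A quandle on carrier Q with operation qop (q * r = qop q r).\<close>
definition quandle :: "'a set \<Rightarrow> ('a \<Rightarrow> 'a \<Rightarrow> 'a) \<Rightarrow> bool" where
  "quandle Q qop \<longleftrightarrow>
     (\<forall>q\<in>Q. \<forall>r\<in>Q. qop q r \<in> Q) \<and>
     (\<forall>q\<in>Q. qop q q = q) \<and>
     (\<forall>r\<in>Q. \<forall>s\<in>Q. \<exists>!q. q \<in> Q \<and> qop q r = s) \<and>
     (\<forall>q\<in>Q. \<forall>r\<in>Q. \<forall>s\<in>Q. qop (qop q r) s = qop (qop q s) (qop r s))"

definition weak_latin :: "'a set \<Rightarrow> ('a \<Rightarrow> 'a \<Rightarrow> 'a) \<Rightarrow> bool" where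
  "weak_latin Q qop \<longleftrightarrow>
     (\<forall>q\<in>Q. \<forall>r\<in>Q. \<exists>qh\<in>Q. qop qh q = qop qh r \<longrightarrow> q = r)"

definition right_order :: "'a set \<Rightarrow> ('a \<Rightarrow> 'a \<Rightarrow> 'a) \<Rightarrow> ('a \<Rightarrow> 'a \<Rightarrow> bool) \<Rightarrow> bool" where
  "right_order Q qop lt \<longleftrightarrow>
     (\<forall>q\<in>Q. \<not> lt q q) \<and>
     (\<forall>q\<in>Q. \<forall>r\<in>Q. \<forall>s\<in>Q. lt q r \<longrightarrow> lt r s \<longrightarrow> lt q s) \<and>
     (\<forall>q\<in>Q. \<forall>r\<in>Q. q \<noteq> r \<longrightarrow> lt q r \<or> lt r q) \<and>
     (\<forall>q1\<in>Q. \<forall>q2\<in>Q. \<forall>q\<in>Q. lt q1 q2 \<longrightarrow> lt (qop q1 q) (qop q2 q))"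

definition enum_dom :: "'a set \<Rightarrow> nat set" where
  "enum_dom Q = (if finite Q then {..<card Q} else UNIV)"

definition enumeration :: "'a set \<Rightarrow> (nat \<Rightarrow> 'a) \<Rightarrow> bool" where
  "enumeration Q e \<longleftrightarrow> bij_betw e (enum_dom Q) Q"

text \<open>The values v n = iota(e n) of the dynamical realization built from enumeration e;
  v 0 is arbitrary.\<close>
definition dyn_values :: "'a set \<Rightarrow> ('a \<Rightarrow> 'a \<Rightarrow> bool) \<Rightarrow> (nat \<Rightarrow> 'a) \<Rightarrow> (nat \<Rightarrow> real) \<Rightarrow> bool" where
  "dyn_values Q lt e v \<longleftrightarrow>
     (\<forall>n\<in>enum_dom Q. 0 < n \<longrightarrow>
       (if \<forall>i<n. lt (e n) (e i) then v n = Min (v ` {..<n}) - 1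
        else if \<forall>i<n. lt (e i) (e n) then v n = Max (v ` {..<n}) + 1
        else (\<exists>a<n. \<exists>b<n. lt (e a) (e n) \<and> lt (e n) (e b) \<and>
                (\<forall>i<n. \<not> (lt (e a) (e i) \<and> lt (e i) (e n))) \<and>
                (\<forall>i<n. \<not> (lt (e n) (e i) \<and> lt (e i) (e b))) \<and>
                v n = (v a + v b) / 2)))"

definition dyn_realization ::
  "'a set \<Rightarrow> ('a \<Rightarrow> 'a \<Rightarrow> 'a) \<Rightarrow> ('a \<Rightarrow> 'a \<Rightarrow> bool) \<Rightarrow> (nat \<Rightarrow> 'a) \<Rightarrow> ('a \<Rightarrow> real \<Rightarrow> real) \<Rightarrow> bool" where
  "dyn_realization Q qop lt e rho \<longleftrightarrow>
     (\<exists>v. dyn_values Q lt e v \<and>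
       (let iota = (\<lambda>q. v (the_inv_into (enum_dom Q) e q)) in
        \<forall>q\<in>Q. continuous_on UNIV (rho q) \<and>
          (\<forall>r\<in>Q. rho q (iota r) = iota (qop r q)) \<and>
          (\<forall>C\<in>components (- closure (iota ` Q)).
             (bounded C \<longrightarrow> (\<exists>a b. \<forall>x\<in>C. rho q x = a * x + b)) \<and>
             (\<not> bounded C \<longrightarrow> (\<forall>x\<in>C. rho q x = x)))))"

end

theory Submission
  imports Defs
begin

(* Let iota and iota' be the embeddings of Q into the real line built from the two enumerations.
  Each new value is placed one unit beyond all earlier ones or at the midpoint of its two
  neighbours among them, so iota is an order embedding and its image S is gap-regular: S
  contains its finite supremum and infimum, and every point of its hull outside S either lies
  in a gap between adjacent points of S or is a limit of S from both sides. (A one-sided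
  accumulation is impossible, because a point inserted into a gap halves the distance to the
  far side.) The order isomorphism iota' o iota^-1 between two gap-regular sets extends,
  affinely across gaps, by continuity at limit points and by translations beyond the ends, to
  an increasing homeomorphism h of the real line. Right multiplication by q is an order
  automorphism of Q, so rho q maps gaps of S to gaps of S. As rho q and rho' q are affine on
  gaps and the identity beyond the ends, h conjugates them on S, on the gaps, on the two rays
  and, by continuity, on the closure of S. *)

lemma strict_mono_surj_continuous:
  fixes f :: "real \<Rightarrow> real"
  assumes mono: "strict_mono f" and surj: "surj f"
  shows "continuous_on UNIV f"
proof (rule continuous_at_imp_continuous_on, intro ballI)
  fix x :: real
  show "isCont f x"
    unfolding continuous_at_eps_delta
  proof (intro allI impI)
    fix \<epsilon> :: real assume "\<epsilon> > 0"
    obtain a b where a: "f a = f x - \<epsilon>" and b: "f b = f x + \<epsilon>" using surj by (metis surjD)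
    have "f a < f x" "f x < f b" using a b \<open>\<epsilon> > 0\<close> by simp_all
    then have "a < x" "x < b" using mono by (simp_all add: strict_mono_less)
    show "\<exists>\<delta>>0. \<forall>y. dist y x < \<delta> \<longrightarrow> dist (f y) (f x) < \<epsilon>"
    proof (intro exI[of _ "min (x - a) (b - x)"] conjI allI impI)
      show "0 < min (x - a) (b - x)" using \<open>a < x\<close> \<open>x < b\<close> by simp
      fix y assume "dist y x < min (x - a) (b - x)"
      then have "a < y" "y < b" by (auto simp: dist_real_def)
      then have "f a < f y" "f y < f b" using mono by (simp_all add: strict_mono_less)
      then show "dist (f y) (f x) < \<epsilon>" using a b by (auto simp: dist_real_def)
    qed
  qed
qed

lemma strict_mono_surj_homeomorphism:
  fixes f :: "real \<Rightarrow> real"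
  assumes mono: "strict_mono f" and surj: "surj f"
  shows "homeomorphism UNIV UNIV f (inv f)"
proof -
  have inj: "inj f" using mono strict_mono_imp_inj_on by blast
  have inv_mono: "strict_mono (inv f)"
  proof (rule strict_monoI)
    fix x y :: real assume "x < y"
    then have "f (inv f x) < f (inv f y)" using surj by (simp add: surj_f_inv_f)
    then show "inv f x < inv f y" using mono by (simp add: strict_mono_less)
  qed
  have inv_surj: "surj (inv f)" using inj by (metis inv_f_f surjI)
  show ?thesis
    unfolding homeomorphism_def
    using strict_mono_surj_continuous[OF mono surj] strict_mono_surj_continuous[OF inv_mono inv_surj]
      inv_surj inj surj by (auto simp: surj_f_inv_f)
qed

section \<open>Gap-regular sets of reals\<close>

definition adjacent :: "'a set \<Rightarrow> ('a \<Rightarrow> 'a \<Rightarrow> bool) \<Rightarrow> 'a \<Rightarrow> 'a \<Rightarrow> bool" where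
  "adjacent A lt a b \<longleftrightarrow> a \<in> A \<and> b \<in> A \<and> lt a b \<and> (\<forall>c\<in>A. \<not> (lt a c \<and> lt c b))"

lemma adjacent_real_iff:
  "adjacent S (<) l u \<longleftrightarrow> l \<in> S \<and> u \<in> S \<and> l < (u::real) \<and> (\<forall>s\<in>S. s \<le> l \<or> u \<le> s)"
  unfolding adjacent_def by (auto simp: not_less)

lemma adjacent_image_iff:
  assumes "f ` A = B" and "\<And>a b. a \<in> A \<Longrightarrow> b \<in> A \<Longrightarrow> lt' (f a) (f b) \<longleftrightarrow> lt a b"
    and "a \<in> A" "b \<in> A"
  shows "adjacent B lt' (f a) (f b) \<longleftrightarrow> adjacent A lt a b"
proof -
  have "(\<forall>c\<in>B. \<not> (lt' (f a) c \<and> lt' c (f b))) \<longleftrightarrow> (\<forall>c\<in>A. \<not> (lt a c \<and> lt c b))"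
    using assms by auto
  then show ?thesis using assms unfolding adjacent_def by blast
qed

lemma adjacent_around_unique:
  assumes "adjacent S (<) l u" "l < x" "x < u" "adjacent S (<) l' u'" "l' < x" "x < (u'::real)"
  shows "l = l' \<and> u = u'"
proof -
  have "l' \<le> l" "l \<le> l'" "u \<le> u'" "u' \<le> u" using assms unfolding adjacent_real_iff by force+
  then show ?thesis by simp
qed

lemma closure_below_iff:
  fixes x :: real
  shows "x \<in> closure (S \<inter> {..x}) \<longleftrightarrow> (\<forall>\<epsilon>>0. \<exists>s\<in>S. x - \<epsilon> < s \<and> s \<le> x)"
  unfolding closure_approachable dist_real_def
proof (intro iffI allI impI)
  fix \<epsilon> :: real
  assume "\<forall>\<epsilon>>0. \<exists>s\<in>S \<inter> {..x}. \<bar>s - x\<bar> < \<epsilon>" and "\<epsilon> > 0"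
  then obtain s where "s \<in> S" "s \<le> x" "\<bar>s - x\<bar> < \<epsilon>" by blast
  then show "\<exists>s\<in>S. x - \<epsilon> < s \<and> s \<le> x" by (intro bexI[of _ s]) auto
next
  fix \<epsilon> :: real
  assume "\<forall>\<epsilon>>0. \<exists>s\<in>S. x - \<epsilon> < s \<and> s \<le> x" and "\<epsilon> > 0"
  then obtain s where "s \<in> S" "x - \<epsilon> < s" "s \<le> x" by blast
  then show "\<exists>s\<in>S \<inter> {..x}. \<bar>s - x\<bar> < \<epsilon>" by (intro bexI[of _ s]) auto
qed

lemma closure_above_iff:
  fixes x :: real
  shows "x \<in> closure (S \<inter> {x..}) \<longleftrightarrow> (\<forall>\<epsilon>>0. \<exists>s\<in>S. x \<le> s \<and> s < x + \<epsilon>)"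
  unfolding closure_approachable dist_real_def
proof (intro iffI allI impI)
  fix \<epsilon> :: real
  assume "\<forall>\<epsilon>>0. \<exists>s\<in>S \<inter> {x..}. \<bar>s - x\<bar> < \<epsilon>" and "\<epsilon> > 0"
  then obtain s where "s \<in> S" "x \<le> s" "\<bar>s - x\<bar> < \<epsilon>" by blast
  then show "\<exists>s\<in>S. x \<le> s \<and> s < x + \<epsilon>" by (intro bexI[of _ s]) auto
next
  fix \<epsilon> :: real
  assume "\<forall>\<epsilon>>0. \<exists>s\<in>S. x \<le> s \<and> s < x + \<epsilon>" and "\<epsilon> > 0"
  then obtain s where "s \<in> S" "x \<le> s" "s < x + \<epsilon>" by blast
  then show "\<exists>s\<in>S \<inter> {x..}. \<bar>s - x\<bar> < \<epsilon>" by (intro bexI[of _ s]) auto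
qed

lemma squeezed_imp_two_sided_limit:
  fixes x :: real
  assumes "\<And>\<epsilon>. \<epsilon> > 0 \<Longrightarrow> \<exists>a\<in>S. \<exists>b\<in>S. a < x \<and> x < b \<and> b - a < \<epsilon>"
  shows "x \<in> closure (S \<inter> {..x})" and "x \<in> closure (S \<inter> {x..})"
proof -
  have "\<exists>s\<in>S. x - \<epsilon> < s \<and> s \<le> x" "\<exists>s\<in>S. x \<le> s \<and> s < x + \<epsilon>" if "\<epsilon> > 0" for \<epsilon>
  proof -
    obtain a b where "a \<in> S" "b \<in> S" "a < x" "x < b" "b - a < \<epsilon>" using assms \<open>\<epsilon> > 0\<close> by blast
    then show "\<exists>s\<in>S. x - \<epsilon> < s \<and> s \<le> x" "\<exists>s\<in>S. x \<le> s \<and> s < x + \<epsilon>"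
      by (simp_all add: bexI[of _ a] bexI[of _ b])
  qed
  then show "x \<in> closure (S \<inter> {..x})" "x \<in> closure (S \<inter> {x..})"
    unfolding closure_below_iff closure_above_iff by blast+
qed

lemma limit_from_below_not_in_gap:
  fixes x :: real
  assumes "x \<in> closure (S \<inter> {..x})" and "adjacent S (<) l u" and "x < u"
  shows "x \<le> l"
proof -
  have "S \<inter> {..x} \<subseteq> {..l}" using assms(2,3) unfolding adjacent_real_iff by fastforce
  then have "closure (S \<inter> {..x}) \<subseteq> {..l}" by (simp add: closure_minimal)
  then show ?thesis using assms(1) by auto
qed

(* Equivalently, every finite endpoint of a component of the complement of closure S lies in S. *)
definition gap_regular :: "real set \<Rightarrow> bool" where
  "gap_regular S \<longleftrightarrow>
     (\<forall>x. (\<exists>s\<in>S. s \<le> x) \<longrightarrow> (\<exists>s\<in>S. x \<le> s) \<longrightarrow>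
        (\<exists>l u. adjacent S (<) l u \<and> l < x \<and> x < u) \<or>
        x \<in> closure (S \<inter> {..x}) \<and> x \<in> closure (S \<inter> {x..})) \<and>
     (S \<noteq> {} \<longrightarrow> bdd_above S \<longrightarrow> Sup S \<in> S) \<and>
     (S \<noteq> {} \<longrightarrow> bdd_below S \<longrightarrow> Inf S \<in> S)"

lemma gap_regular_cases [consumes 3, case_names gap limit]:
  assumes "gap_regular S" and "\<exists>s\<in>S. s \<le> x" and "\<exists>s\<in>S. x \<le> s"
  obtains (gap) l u where "adjacent S (<) l u" "l < x" "x < u"
  | (limit) "x \<in> closure (S \<inter> {..x})" "x \<in> closure (S \<inter> {x..})"
  using conjunct1[OF assms(1)[unfolded gap_regular_def], rule_format, OF assms(2,3)] by blast

lemma gap_regular_Sup_in: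
  assumes "gap_regular S" "S \<noteq> {}" "bdd_above S" shows "Sup S \<in> S"
  using conjunct1[OF conjunct2[OF assms(1)[unfolded gap_regular_def]]] assms(2,3) by blast

lemma gap_regular_Inf_in:
  assumes "gap_regular S" "S \<noteq> {}" "bdd_below S" shows "Inf S \<in> S"
  using conjunct2[OF conjunct2[OF assms(1)[unfolded gap_regular_def]]] assms(2,3) by blast

section \<open>Extending order isomorphisms between gap-regular sets\<close>

definition interpolate :: "real set \<Rightarrow> (real \<Rightarrow> real) \<Rightarrow> real \<Rightarrow> real" where
  "interpolate S f x =
    (if (\<exists>s\<in>S. s \<le> x) \<and> (\<exists>s\<in>S. x \<le> s) then
       (if \<exists>l u. adjacent S (<) l u \<and> l < x \<and> x < u then
          (let p = (SOME p. adjacent S (<) (fst p) (snd p) \<and> fst p < x \<and> x < snd p)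
           in f (fst p) + (x - fst p) / (snd p - fst p) * (f (snd p) - f (fst p)))
        else Sup (f ` {s\<in>S. s \<le> x}))
     else if \<exists>s\<in>S. s \<le> x then x - Sup S + f (Sup S)
     else x - Inf S + f (Inf S))"

lemma interpolate_above:
  assumes "S \<noteq> {}" and "\<forall>s\<in>S. s < x"
  shows "interpolate S f x = x - Sup S + f (Sup S)"
proof -
  have "\<exists>s\<in>S. s \<le> x" using assms by (meson equals0I less_imp_le)
  moreover have "\<not> (\<exists>s\<in>S. x \<le> s)" using assms(2) by (meson not_le)
  ultimately show ?thesis unfolding interpolate_def by simp
qed

lemma interpolate_below:
  assumes "\<forall>s\<in>S. x < s"
  shows "interpolate S f x = x - Inf S + f (Inf S)"
proof -
  have "\<not> (\<exists>s\<in>S. s \<le> x)" using assms by (meson not_le)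
  then show ?thesis unfolding interpolate_def by simp
qed

lemma affine_interpolation_less:
  fixes l u a b x y :: real
  assumes "l < u" "a < b" "x < y"
  shows "a + (x - l) / (u - l) * (b - a) < a + (y - l) / (u - l) * (b - a)"
proof -
  have "(x - l) / (u - l) < (y - l) / (u - l)" using assms by (simp add: divide_strict_right_mono)
  then have "(x - l) / (u - l) * (b - a) < (y - l) / (u - l) * (b - a)"
    using assms by (intro mult_strict_right_mono) auto
  then show ?thesis by (rule add_strict_left_mono)
qed

locale order_iso_extension =
  fixes S S' :: "real set" and f :: "real \<Rightarrow> real"
  assumes regular: "gap_regular S" and regular': "gap_regular S'"
    and mono: "strict_mono_on S f" and image: "f ` S = S'"
begin

lemma f_less_iff: "s \<in> S \<Longrightarrow> t \<in> S \<Longrightarrow> f s < f t \<longleftrightarrow> s < t"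
  using mono by (rule strict_mono_on_less)

lemma f_le_iff: "s \<in> S \<Longrightarrow> t \<in> S \<Longrightarrow> f s \<le> f t \<longleftrightarrow> s \<le> t"
  using mono by (rule strict_mono_on_less_eq)

lemma adjacent_iff_adjacent_image: "l \<in> S \<Longrightarrow> u \<in> S \<Longrightarrow> adjacent S' (<) (f l) (f u) \<longleftrightarrow> adjacent S (<) l u"
  using image f_less_iff by (rule adjacent_image_iff)

lemma interpolate_limit:
  assumes "x \<in> closure (S \<inter> {..x})" and "\<exists>s\<in>S. x \<le> s"
  shows "interpolate S f x = Sup (f ` {s\<in>S. s \<le> x})"
proof -
  have "S \<inter> {..x} \<noteq> {}" using assms(1) by auto
  then have hull: "(\<exists>s\<in>S. s \<le> x) \<and> (\<exists>s\<in>S. x \<le> s)" using assms(2) by auto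
  have no_gap: "\<not> (\<exists>l u. adjacent S (<) l u \<and> l < x \<and> x < u)"
    using limit_from_below_not_in_gap[OF assms(1)] by (meson not_le)
  show ?thesis unfolding interpolate_def if_P[OF hull] if_not_P[OF no_gap] ..
qed

lemma interpolate_eq: "s \<in> S \<Longrightarrow> interpolate S f s = f s"
  using closure_subset[of "S \<inter> {..s}"]
  by (subst interpolate_limit) (auto intro: cSup_eq_maximum simp: f_le_iff)

lemma interpolate_gap:
  assumes gap: "adjacent S (<) l u" and "l \<le> x" "x \<le> u"
  shows "interpolate S f x = f l + (x - l) / (u - l) * (f u - f l)"
proof -
  have "l \<in> S" "u \<in> S" "l < u" using gap by (auto simp: adjacent_def)
  then have hull: "(\<exists>s\<in>S. s \<le> x) \<and> (\<exists>s\<in>S. x \<le> s)" using assms by auto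
  show ?thesis
  proof (cases "l < x \<and> x < u")
    case True
    define p where "p = (SOME p. adjacent S (<) (fst p) (snd p) \<and> fst p < x \<and> x < snd p)"
    have "\<exists>p. adjacent S (<) (fst p) (snd p) \<and> fst p < x \<and> x < snd p"
      using gap True by (intro exI[of _ "(l, u)"]) auto
    then have p: "adjacent S (<) (fst p) (snd p) \<and> fst p < x \<and> x < snd p"
      unfolding p_def by (rule someI_ex)
    then have "fst p = l \<and> snd p = u" using adjacent_around_unique gap True by blast
    moreover have "\<exists>l u. adjacent S (<) l u \<and> l < x \<and> x < u" using gap True by blast
    ultimately show ?thesis unfolding interpolate_def using hull by (simp add: p_def[symmetric] Let_def)
  next
    case False
    then have "x = l \<or> x = u" using assms by auto
    then show ?thesis using interpolate_eq \<open>l \<in> S\<close> \<open>u \<in> S\<close> \<open>l < u\<close> by auto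
  qed
qed

lemma interpolate_in_gap:
  assumes gap: "adjacent S (<) l u" and "l < x" "x < u"
  shows "f l < interpolate S f x" "interpolate S f x < f u"
proof -
  have "l \<in> S" "u \<in> S" "l < u" using gap by (auto simp: adjacent_def)
  then have "f l < f u" by (simp add: f_less_iff)
  then show "f l < interpolate S f x" "interpolate S f x < f u"
    using affine_interpolation_less[OF \<open>l < u\<close> \<open>f l < f u\<close>, of l x]
      affine_interpolation_less[OF \<open>l < u\<close> \<open>f l < f u\<close>, of x u]
      interpolate_gap[OF gap] assms(2,3) by auto
qed

lemma less_interpolate:
  assumes "s \<in> S" and "s < x"
  shows "f s < interpolate S f x"
proof (cases "\<exists>t\<in>S. x \<le> t")
  case True
  then obtain t where "t \<in> S" "x \<le> t" by blast
  have "\<exists>s\<in>S. s \<le> x" using assms less_imp_le by blast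
  from regular this True show ?thesis
  proof (cases rule: gap_regular_cases)
    case (gap l u)
    then have "s \<le> l" "l \<in> S" using assms unfolding adjacent_real_iff by force+
    then show ?thesis using interpolate_in_gap[OF gap] \<open>s \<in> S\<close> f_le_iff by fastforce
  next
    case limit
    obtain s' where "s' \<in> S" "s < s'" "s' \<le> x"
      using limit(1)[unfolded closure_below_iff, rule_format, of "x - s"] \<open>s < x\<close> by auto
    have "f s < f s'" using \<open>s \<in> S\<close> \<open>s' \<in> S\<close> \<open>s < s'\<close> by (simp add: f_less_iff)
    also have "f s' \<le> Sup (f ` {s\<in>S. s \<le> x})"
      using \<open>s' \<in> S\<close> \<open>s' \<le> x\<close> \<open>t \<in> S\<close> \<open>x \<le> t\<close>
      by (intro cSup_upper bdd_aboveI[of _ "f t"]) (auto simp: f_le_iff)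
    also have "\<dots> = interpolate S f x" using interpolate_limit limit(1) True by simp
    finally show ?thesis .
  qed
next
  case False
  then have "\<forall>s\<in>S. s < x" by (simp add: not_le)
  then have "S \<noteq> {}" "bdd_above S" using assms(1) by (auto intro!: bdd_aboveI[of _ x] less_imp_le)
  then have "Sup S \<in> S" "s \<le> Sup S" using gap_regular_Sup_in[OF regular] cSup_upper assms(1) by auto
  moreover have "interpolate S f x = x - Sup S + f (Sup S)"
    using interpolate_above \<open>\<forall>s\<in>S. s < x\<close> assms(1) by blast
  ultimately show ?thesis using \<open>\<forall>s\<in>S. s < x\<close> \<open>s \<in> S\<close> f_le_iff by fastforce
qed

lemma interpolate_less:
  assumes "s \<in> S" and "x < s"
  shows "interpolate S f x < f s"
proof (cases "\<exists>t\<in>S. t \<le> x")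
  case True
  have "\<exists>s\<in>S. x \<le> s" using assms less_imp_le by blast
  with regular True show ?thesis
  proof (cases rule: gap_regular_cases)
    case (gap l u)
    then have "u \<le> s" "u \<in> S" using assms unfolding adjacent_real_iff by force+
    then show ?thesis using interpolate_in_gap[OF gap] \<open>s \<in> S\<close> f_le_iff by fastforce
  next
    case limit
    obtain s' where "s' \<in> S" "x \<le> s'" "s' < s"
      using limit(2)[unfolded closure_above_iff, rule_format, of "s - x"] \<open>x < s\<close> by auto
    have "interpolate S f x = Sup (f ` {s\<in>S. s \<le> x})"
      using interpolate_limit limit(1) \<open>\<exists>s\<in>S. x \<le> s\<close> by simp
    also have "\<dots> \<le> f s'"
      using True \<open>s' \<in> S\<close> \<open>x \<le> s'\<close> by (intro cSup_least) (auto simp: f_le_iff)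
    also have "f s' < f s" using \<open>s \<in> S\<close> \<open>s' \<in> S\<close> \<open>s' < s\<close> by (simp add: f_less_iff)
    finally show ?thesis .
  qed
next
  case False
  then have "\<forall>s\<in>S. x < s" by (simp add: not_le)
  then have "S \<noteq> {}" "bdd_below S" using assms(1) by (auto intro!: bdd_belowI[of _ x] less_imp_le)
  then have "Inf S \<in> S" "Inf S \<le> s" using gap_regular_Inf_in[OF regular] cInf_lower assms(1) by auto
  moreover have "interpolate S f x = x - Inf S + f (Inf S)"
    using interpolate_below \<open>\<forall>s\<in>S. x < s\<close> by blast
  ultimately show ?thesis using \<open>\<forall>s\<in>S. x < s\<close> \<open>s \<in> S\<close> f_le_iff by fastforce
qed


lemma interpolate_less_without_points_between:
  assumes "x < y" and sep: "\<forall>s\<in>S. s < x \<or> y < s"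
  shows "interpolate S f x < interpolate S f y"
proof -
  consider (above) "\<forall>s\<in>S. s < x" "S \<noteq> {}" | (below) "\<forall>s\<in>S. y < s"
    | (hull) "\<exists>s\<in>S. s \<le> x" "\<exists>s\<in>S. x \<le> s"
  proof (cases "\<exists>s\<in>S. s \<le> x")
    case True
    then show ?thesis using sep that by (cases "\<exists>s\<in>S. x \<le> s") (auto simp: not_le)
  next
    case False
    then have "\<forall>s\<in>S. y < s" using sep less_imp_le by blast
    then show ?thesis using that by blast
  qed
  then show ?thesis
  proof cases
    case above
    then have "\<forall>s\<in>S. s < y" using \<open>x < y\<close> by force
    then show ?thesis using interpolate_above[OF above(2)] above(1) \<open>x < y\<close> by simp
  next
    case below
    then have "\<forall>s\<in>S. x < s" using \<open>x < y\<close> by force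
    then show ?thesis using interpolate_below below \<open>x < y\<close> by simp
  next
    case hull
    from regular hull show ?thesis
    proof (cases rule: gap_regular_cases)
      case (gap l u)
      then have "l < u" "u \<in> S" by (auto simp: adjacent_def)
      then have "y < u" using sep gap(3) by fastforce
      have "f l < f u" using gap \<open>l < u\<close> by (auto simp: adjacent_def f_less_iff)
      then show ?thesis
        using interpolate_gap[OF gap(1)] gap(2) \<open>x < y\<close> \<open>y < u\<close>
          affine_interpolation_less[OF \<open>l < u\<close> \<open>f l < f u\<close> \<open>x < y\<close>] by simp
    next
      case limit
      obtain s where "s \<in> S" "x \<le> s" "s < y"
        using limit(2)[unfolded closure_above_iff, rule_format, of "y - x"] \<open>x < y\<close> by auto
      then show ?thesis using sep by fastforce
    qed
  qed
qed

lemma strict_mono_interpolate: "strict_mono (interpolate S f)"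
proof (rule strict_monoI)
  fix x y :: real
  assume "x < y"
  show "interpolate S f x < interpolate S f y"
  proof (cases "\<exists>s\<in>S. x \<le> s \<and> s \<le> y")
    case True
    then obtain s where "s \<in> S" "x \<le> s" "s \<le> y" by blast
    show ?thesis
    proof (cases "x = s")
      case True
      then show ?thesis using interpolate_eq less_interpolate \<open>s \<in> S\<close> \<open>x < y\<close> by simp
    next
      case False
      then have "interpolate S f x < f s" using interpolate_less \<open>s \<in> S\<close> \<open>x \<le> s\<close> by simp
      also have "f s \<le> interpolate S f y"
        using interpolate_eq less_interpolate \<open>s \<in> S\<close> \<open>s \<le> y\<close> by (cases "s = y") (auto intro: less_imp_le)
      finally show ?thesis .
    qed
  next
    case False
    then show ?thesis using \<open>x < y\<close> by (intro interpolate_less_without_points_between) auto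
  qed
qed

lemma interpolate_mono: "a \<le> b \<Longrightarrow> interpolate S f a \<le> interpolate S f b"
  using strict_mono_interpolate by (simp add: strict_mono_less_eq)

lemma interpolate_hits_gap:
  assumes gap': "adjacent S' (<) l' u'" and "l' < y" "y < u'"
  shows "\<exists>x. interpolate S f x = y"
proof -
  obtain l u where "l \<in> S" "u \<in> S" "l' = f l" "u' = f u"
    using gap' image unfolding adjacent_def by blast
  then have gap: "adjacent S (<) l u" using gap' adjacent_iff_adjacent_image by simp
  then have "l < u" "f l < f u" using \<open>l' = f l\<close> \<open>u' = f u\<close> gap' by (auto simp: adjacent_def)
  define x where "x = l + (y - f l) / (f u - f l) * (u - l)"
  have "l < x" "x < u"
    using affine_interpolation_less[OF \<open>f l < f u\<close> \<open>l < u\<close>, of "f l" y]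
      affine_interpolation_less[OF \<open>f l < f u\<close> \<open>l < u\<close>, of y "f u"] assms(2,3)
    unfolding x_def \<open>l' = f l\<close> \<open>u' = f u\<close> by auto
  then have "interpolate S f x = f l + (x - l) / (u - l) * (f u - f l)"
    using interpolate_gap[OF gap] by simp
  also have "\<dots> = y" using \<open>l < u\<close> \<open>f l < f u\<close> unfolding x_def by simp
  finally show ?thesis by blast
qed

lemma interpolate_hits_limit:
  assumes "y \<notin> S'" and below: "y \<in> closure (S' \<inter> {..y})" and above: "y \<in> closure (S' \<inter> {y..})"
    and "\<exists>s\<in>S. y \<le> f s"
  shows "\<exists>x. interpolate S f x = y"
proof -
  define B where "B = {s\<in>S. f s \<le> y}"
  obtain t where "t \<in> S" "y \<le> f t" using assms(4) by blast
  then have "y < f t" using \<open>y \<notin> S'\<close> image by (auto simp: order_le_less)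
  have "S' \<inter> {..y} \<noteq> {}" using below by auto
  then have "B \<noteq> {}" using image unfolding B_def by auto
  have "b < t" if "b \<in> B" for b
    using that \<open>t \<in> S\<close> \<open>y < f t\<close> f_less_iff unfolding B_def by fastforce
  then have "bdd_above B" by (meson bdd_aboveI less_imp_le)
  define x where "x = Sup B"
  have "\<not> interpolate S f x < y"
  proof
    assume "interpolate S f x < y"
    then obtain s where "s \<in> S" "interpolate S f x < f s" "f s \<le> y"
      using below[unfolded closure_below_iff, rule_format, of "y - interpolate S f x"] image by auto
    then have "s \<in> B" unfolding B_def by simp
    then have "s \<le> x" unfolding x_def using \<open>bdd_above B\<close> by (rule cSup_upper)
    then show False
      using \<open>interpolate S f x < f s\<close> interpolate_eq[OF \<open>s \<in> S\<close>] interpolate_mono by fastforce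
  qed
  moreover have "\<not> y < interpolate S f x"
  proof
    assume "y < interpolate S f x"
    then obtain s where "s \<in> S" "y \<le> f s" "f s < interpolate S f x"
      using above[unfolded closure_above_iff, rule_format, of "interpolate S f x - y"] image by auto
    then have "y < f s" using \<open>y \<notin> S'\<close> image by (auto simp: order_le_less)
    then have "\<forall>b\<in>B. b \<le> s" using \<open>s \<in> S\<close> f_le_iff unfolding B_def by fastforce
    then have "x \<le> s" unfolding x_def using \<open>B \<noteq> {}\<close> by (simp add: cSup_least)
    then show False
      using \<open>f s < interpolate S f x\<close> interpolate_eq[OF \<open>s \<in> S\<close>] interpolate_mono by fastforce
  qed
  ultimately show ?thesis by (metis linorder_neqE)
qed

lemma interpolate_hits_above:
  assumes "S' \<noteq> {}" and "\<forall>s'\<in>S'. s' < y"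
  shows "\<exists>x. interpolate S f x = y"
proof -
  have "bdd_above S'" using assms(2) by (meson bdd_aboveI less_imp_le)
  then have "Sup S' \<in> S'" using gap_regular_Sup_in[OF regular' assms(1)] by simp
  then obtain m where "m \<in> S" "f m = Sup S'" using image by auto
  have "s \<le> m" if "s \<in> S" for s
  proof -
    have "f s \<le> Sup S'" using that image \<open>bdd_above S'\<close> by (auto intro: cSup_upper)
    then show ?thesis using f_le_iff[OF that \<open>m \<in> S\<close>] \<open>f m = Sup S'\<close> by simp
  qed
  then have "Sup S = m" using \<open>m \<in> S\<close> by (intro cSup_eq_maximum) auto
  define x where "x = y - f m + m"
  have "f m < y" using assms(2) \<open>Sup S' \<in> S'\<close> \<open>f m = Sup S'\<close> by simp
  then have "\<forall>s\<in>S. s < x" using \<open>\<And>s. s \<in> S \<Longrightarrow> s \<le> m\<close> unfolding x_def by force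
  then have "interpolate S f x = x - m + f m"
    using interpolate_above \<open>m \<in> S\<close> \<open>Sup S = m\<close> by blast
  then show ?thesis unfolding x_def by auto
qed

lemma interpolate_hits_below:
  assumes "\<forall>s'\<in>S'. y < s'"
  shows "\<exists>x. interpolate S f x = y"
proof -
  define x where "x = y - f (Inf S) + Inf S"
  have "\<forall>s\<in>S. x < s"
  proof (cases "S = {}")
    case False
    then have "S' \<noteq> {}" using image by auto
    have "bdd_below S'" using assms by (meson bdd_belowI less_imp_le)
    then have "Inf S' \<in> S'" using gap_regular_Inf_in[OF regular' \<open>S' \<noteq> {}\<close>] by simp
    then obtain m where "m \<in> S" "f m = Inf S'" using image by auto
    have "m \<le> s" if "s \<in> S" for s
    proof -
      have "Inf S' \<le> f s" using that image \<open>bdd_below S'\<close> by (auto intro: cInf_lower)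
      then show ?thesis using f_le_iff[OF \<open>m \<in> S\<close> that] \<open>f m = Inf S'\<close> by simp
    qed
    then have "Inf S = m" using \<open>m \<in> S\<close> by (intro cInf_eq_minimum) auto
    have "y < f m" using assms \<open>Inf S' \<in> S'\<close> \<open>f m = Inf S'\<close> by simp
    then show ?thesis using \<open>\<And>s. s \<in> S \<Longrightarrow> m \<le> s\<close> \<open>Inf S = m\<close> unfolding x_def by force
  qed simp
  then have "interpolate S f x = y" using interpolate_below unfolding x_def by simp
  then show ?thesis by blast
qed

lemma surj_interpolate: "surj (interpolate S f)"
proof -
  have "\<exists>x. interpolate S f x = y" for y
  proof -
    consider (point) "y \<in> S'" | (hull) "y \<notin> S'" "\<exists>s'\<in>S'. s' \<le> y" "\<exists>s'\<in>S'. y \<le> s'"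
      | (above) "S' \<noteq> {}" "\<forall>s'\<in>S'. s' < y" | (below) "\<forall>s'\<in>S'. y < s'"
      by (metis empty_iff not_le)
    then show ?thesis
    proof cases
      case point
      then show ?thesis using image interpolate_eq by auto
    next
      case hull
      from regular' hull(2,3) show ?thesis
      proof (cases rule: gap_regular_cases)
        case (gap l' u')
        then show ?thesis by (rule interpolate_hits_gap)
      next
        case limit
        then show ?thesis using interpolate_hits_limit hull(1,3) image by blast
      qed
    next
      case above
      then show ?thesis by (rule interpolate_hits_above)
    next
      case below
      then show ?thesis by (rule interpolate_hits_below)
    qed
  qed
  then show ?thesis by (metis surjI)
qed

end

section \<open>Conjugating maps that are affine off a gap-regular set\<close>

(* The conditions that dyn_realization imposes on each rho q off the image of iota. *)
definition affine_on_complement :: "real set \<Rightarrow> (real \<Rightarrow> real) \<Rightarrow> bool" where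
  "affine_on_complement S g \<longleftrightarrow> continuous_on UNIV g \<and>
     (\<forall>C\<in>components (- closure S).
        (bounded C \<longrightarrow> (\<exists>a b. \<forall>x\<in>C. g x = a * x + b)) \<and> (\<not> bounded C \<longrightarrow> (\<forall>x\<in>C. g x = x)))"

lemma open_gap_component:
  fixes l u :: real
  assumes gap: "adjacent S (<) l u"
  shows "{l<..<u} \<in> components (- closure S)"
  unfolding in_components_maximal
proof (intro conjI allI impI)
  have "l \<in> S" "u \<in> S" "l < u" and sep: "\<forall>s\<in>S. s \<le> l \<or> u \<le> s"
    using gap by (auto simp: adjacent_real_iff)
  then show "{l<..<u} \<noteq> {}" by simp
  have "closure S \<subseteq> - {l<..<u}"
    using sep by (intro closure_minimal) (auto simp: closed_Compl)
  then show "{l<..<u} \<subseteq> - closure S" by auto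
  show "connected {l<..<u}" by simp
  fix D assume D: "D \<noteq> {} \<and> {l<..<u} \<subseteq> D \<and> D \<subseteq> - closure S \<and> connected D"
  have "l \<notin> D" "u \<notin> D" using D \<open>l \<in> S\<close> \<open>u \<in> S\<close> closure_subset by auto
  moreover have "(l + u) / 2 \<in> {l<..<u}" using \<open>l < u\<close> by simp
  then have mid: "(l + u) / 2 \<in> D" using D by blast
  have ivl: "z \<in> D" if "a \<in> D" "b \<in> D" "a \<le> z" "z \<le> b" for a b z
    using D that is_interval_connected_1 unfolding is_interval_1 by blast
  have "l < y \<and> y < u" if "y \<in> D" for y
  proof (rule ccontr)
    assume "\<not> (l < y \<and> y < u)"
    then have "l \<in> D \<or> u \<in> D"
      using ivl[OF that mid, of l] ivl[OF mid that, of u] \<open>l < u\<close> by (auto simp: not_less)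
    then show False using \<open>l \<notin> D\<close> \<open>u \<notin> D\<close> by blast
  qed
  ultimately have "D \<subseteq> {l<..<u}" by auto
  then show "D = {l<..<u}" using D by blast
qed

lemma affine_on_complement_gap:
  fixes l u :: real
  assumes g: "affine_on_complement S g" and gap: "adjacent S (<) l u" and "l \<le> x" "x \<le> u"
  shows "g x = g l + (x - l) / (u - l) * (g u - g l)"
proof -
  have "l < u" using gap by (simp add: adjacent_def)
  have "bounded {l<..<u}" by simp
  then obtain a b where ab: "\<forall>y\<in>{l<..<u}. g y = a * y + b"
    using g open_gap_component[OF gap] unfolding affine_on_complement_def by blast
  have "closed {y. g y = a * y + b}"
    using g unfolding affine_on_complement_def by (intro closed_Collect_eq continuous_intros) auto
  then have "closure {l<..<u} \<subseteq> {y. g y = a * y + b}" using ab by (intro closure_minimal) auto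
  then have "\<forall>y\<in>{l..u}. g y = a * y + b" using \<open>l < u\<close> by auto
  then show ?thesis using assms(3,4) \<open>l < u\<close> by (simp add: field_simps)
qed

lemma not_bounded_above_ray:
  assumes "{y<..} \<subseteq> C" shows "\<not> bounded (C :: real set)"
proof
  assume "bounded C"
  then obtain B where "\<forall>x\<in>C. x \<le> B" using bounded_imp_bdd_above by (auto simp: bdd_above_def)
  moreover have "max y B + 1 \<in> C" using assms by (auto simp: subset_eq max_def)
  ultimately show False using max.cobounded2[of B y] by fastforce
qed

lemma not_bounded_below_ray:
  assumes "{..<y} \<subseteq> C" shows "\<not> bounded (C :: real set)"
proof
  assume "bounded C"
  then obtain B where "\<forall>x\<in>C. B \<le> x" using bounded_imp_bdd_below by (auto simp: bdd_below_def)
  moreover have "min y B - 1 \<in> C" using assms by (auto simp: subset_eq min_def)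
  ultimately show False using min.cobounded2[of B y] by fastforce
qed

lemma affine_on_complement_fixed_above:
  fixes y :: real
  assumes g: "affine_on_complement S g" and "\<forall>s\<in>S. s \<le> y" and "y < x"
  shows "g x = x"
proof -
  have "closure S \<subseteq> {..y}" using assms(2) by (intro closure_minimal) auto
  then have sub: "{y<..} \<subseteq> - closure S" by auto
  moreover have "x \<in> {y<..}" using \<open>y < x\<close> by simp
  ultimately obtain C where C: "C \<in> components (- closure S)" "{y<..} \<subseteq> C"
    using exists_component_superset[OF sub] by auto
  then have "\<forall>z\<in>C. g z = z" using g not_bounded_above_ray[OF C(2)] unfolding affine_on_complement_def by blast
  then show ?thesis using C(2) \<open>x \<in> {y<..}\<close> by blast
qed

lemma affine_on_complement_fixed_below:
  fixes y :: real
  assumes g: "affine_on_complement S g" and "\<forall>s\<in>S. y \<le> s" and "x < y"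
  shows "g x = x"
proof -
  have "closure S \<subseteq> {y..}" using assms(2) by (intro closure_minimal) auto
  then have sub: "{..<y} \<subseteq> - closure S" by auto
  moreover have "x \<in> {..<y}" using \<open>x < y\<close> by simp
  ultimately obtain C where C: "C \<in> components (- closure S)" "{..<y} \<subseteq> C"
    using exists_component_superset[OF sub] by auto
  then have "\<forall>z\<in>C. g z = z" using g not_bounded_below_ray[OF C(2)] unfolding affine_on_complement_def by blast
  then show ?thesis using C(2) \<open>x \<in> {..<y}\<close> by blast
qed

lemma affine_on_interval_compose:
  fixes F G :: "real \<Rightarrow> real"
  assumes F: "\<And>x. l \<le> x \<Longrightarrow> x \<le> u \<Longrightarrow> F x = F l + (x - l) / (u - l) * (F u - F l)"
    and G: "\<And>y. F l \<le> y \<Longrightarrow> y \<le> F u \<Longrightarrow> G y = G (F l) + (y - F l) / (F u - F l) * (G (F u) - G (F l))"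
    and "l < u" "F l < F u" "l \<le> x" "x \<le> u"
  shows "G (F x) = G (F l) + (x - l) / (u - l) * (G (F u) - G (F l))"
proof -
  define t where "t = (x - l) / (u - l)"
  have "0 \<le> t" "t \<le> 1" using assms(3,5,6) by (auto simp: t_def divide_le_eq_1)
  have Fx: "F x = F l + t * (F u - F l)" unfolding t_def by (rule F[OF assms(5,6)])
  have "0 \<le> t * (F u - F l)" using \<open>0 \<le> t\<close> assms(4) by simp
  moreover have "t * (F u - F l) \<le> F u - F l" using \<open>t \<le> 1\<close> assms(4) by (simp add: mult_left_le_one_le)
  ultimately have "F l \<le> F x \<and> F x \<le> F u" unfolding Fx by simp
  then have "G (F x) = G (F l) + (F x - F l) / (F u - F l) * (G (F u) - G (F l))" using G by blast
  also have "(F x - F l) / (F u - F l) = t" using Fx assms(4) by simp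
  finally show ?thesis unfolding t_def .
qed

context order_iso_extension
begin

lemma interpolate_conjugates_on_gap:
  assumes g: "affine_on_complement S g" and g': "affine_on_complement S' g'"
    and gap: "adjacent S (<) l u" and gap_image: "adjacent S (<) (g l) (g u)"
    and on_S: "\<And>s. s \<in> S \<Longrightarrow> interpolate S f (g s) = g' (f s)"
    and "l \<le> x" "x \<le> u"
  shows "interpolate S f (g x) = g' (interpolate S f x)"
proof -
  have "l \<in> S" "u \<in> S" "l < u" "g l < g u" using gap gap_image by (auto simp: adjacent_def)
  then have h_lu: "interpolate S f l = f l" "interpolate S f u = f u" by (simp_all add: interpolate_eq)
  have gap': "adjacent S' (<) (f l) (f u)" using adjacent_iff_adjacent_image gap \<open>l \<in> S\<close> \<open>u \<in> S\<close> by blast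
  then have "f l < f u" by (simp add: adjacent_def)
  have "g l \<in> S" "g u \<in> S" using gap_image by (auto simp: adjacent_def)
  then have h_glu: "interpolate S f (g l) = f (g l)" "interpolate S f (g u) = f (g u)"
    by (simp_all add: interpolate_eq)
  have "interpolate S f (g x) =
      interpolate S f (g l) + (x - l) / (u - l) * (interpolate S f (g u) - interpolate S f (g l))"
  proof (rule affine_on_interval_compose[where F = g and G = "interpolate S f"])
    show "g y = g l + (y - l) / (u - l) * (g u - g l)" if "l \<le> y" "y \<le> u" for y
      using affine_on_complement_gap[OF g gap that] .
    show "interpolate S f y = interpolate S f (g l) +
        (y - g l) / (g u - g l) * (interpolate S f (g u) - interpolate S f (g l))"
      if "g l \<le> y" "y \<le> g u" for y
      using interpolate_gap[OF gap_image that] unfolding h_glu .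
  qed (use \<open>l < u\<close> \<open>g l < g u\<close> assms(6,7) in auto)
  moreover have "g' (interpolate S f x) =
      g' (interpolate S f l) + (x - l) / (u - l) * (g' (interpolate S f u) - g' (interpolate S f l))"
  proof (rule affine_on_interval_compose[where F = "interpolate S f" and G = g'])
    show "interpolate S f y = interpolate S f l + (y - l) / (u - l) * (interpolate S f u - interpolate S f l)"
      if "l \<le> y" "y \<le> u" for y
      using interpolate_gap[OF gap that] unfolding h_lu .
    show "g' y = g' (interpolate S f l) +
        (y - interpolate S f l) / (interpolate S f u - interpolate S f l) *
          (g' (interpolate S f u) - g' (interpolate S f l))"
      if "interpolate S f l \<le> y" "y \<le> interpolate S f u" for y
      using affine_on_complement_gap[OF g' gap'] that unfolding h_lu by blast
  qed (use \<open>l < u\<close> \<open>f l < f u\<close> h_lu assms(6,7) in auto)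
  ultimately show ?thesis using on_S \<open>l \<in> S\<close> \<open>u \<in> S\<close> h_lu by simp
qed

lemma interpolate_conjugates_on_closure:
  assumes "continuous_on UNIV g" and "continuous_on UNIV g'"
    and on_S: "\<And>s. s \<in> S \<Longrightarrow> interpolate S f (g s) = g' (f s)"
    and "x \<in> closure S"
  shows "interpolate S f (g x) = g' (interpolate S f x)"
proof -
  have h: "continuous_on UNIV (interpolate S f)"
    using strict_mono_interpolate surj_interpolate by (rule strict_mono_surj_continuous)
  have "continuous_on UNIV (\<lambda>x. interpolate S f (g x))" "continuous_on UNIV (\<lambda>x. g' (interpolate S f x))"
    using continuous_on_compose2[OF h assms(1)] continuous_on_compose2[OF assms(2) h] by simp_all
  then have "closed {x. interpolate S f (g x) = g' (interpolate S f x)}" by (rule closed_Collect_eq)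
  moreover have "S \<subseteq> {x. interpolate S f (g x) = g' (interpolate S f x)}"
    using on_S interpolate_eq by auto
  ultimately have "closure S \<subseteq> {x. interpolate S f (g x) = g' (interpolate S f x)}"
    by (rule closure_minimal[rotated])
  then show ?thesis using assms(4) by blast
qed

lemma interpolate_fixed_above:
  assumes "affine_on_complement S' g'" and "\<forall>s\<in>S. s \<le> y" and "y < x"
  shows "g' (interpolate S f x) = interpolate S f x"
proof -
  have "\<forall>s'\<in>S'. s' \<le> interpolate S f y" using assms(2) image interpolate_mono interpolate_eq by fastforce
  moreover have "interpolate S f y < interpolate S f x"
    using strict_mono_interpolate assms(3) by (simp add: strict_mono_less)
  ultimately show ?thesis by (rule affine_on_complement_fixed_above[OF assms(1)])
qed

lemma interpolate_fixed_below:
  assumes "affine_on_complement S' g'" and "\<forall>s\<in>S. y \<le> s" and "x < y"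
  shows "g' (interpolate S f x) = interpolate S f x"
proof -
  have "\<forall>s'\<in>S'. interpolate S f y \<le> s'" using assms(2) image interpolate_mono interpolate_eq by fastforce
  moreover have "interpolate S f x < interpolate S f y"
    using strict_mono_interpolate assms(3) by (simp add: strict_mono_less)
  ultimately show ?thesis by (rule affine_on_complement_fixed_below[OF assms(1)])
qed

lemma interpolate_conjugates:
  assumes g: "affine_on_complement S g" and g': "affine_on_complement S' g'"
    and gaps: "\<And>l u. adjacent S (<) l u \<Longrightarrow> adjacent S (<) (g l) (g u)"
    and on_S: "\<And>s. s \<in> S \<Longrightarrow> interpolate S f (g s) = g' (f s)"
  shows "interpolate S f (g x) = g' (interpolate S f x)"
proof (cases "x \<in> closure S")
  case True
  have "continuous_on UNIV g" "continuous_on UNIV g'"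
    using g g' unfolding affine_on_complement_def by blast+
  then show ?thesis using on_S True by (rule interpolate_conjugates_on_closure)
next
  case False
  then obtain \<epsilon> where "\<epsilon> > 0" and far: "\<forall>s\<in>S. \<epsilon> \<le> dist s x"
    unfolding closure_approachable by (meson not_less)
  consider (hull) "\<exists>s\<in>S. s \<le> x" "\<exists>s\<in>S. x \<le> s" | (above) "\<forall>s\<in>S. s \<le> x - \<epsilon>"
    | (below) "\<forall>s\<in>S. x + \<epsilon> \<le> s"
    using far by (fastforce simp: dist_real_def not_le)
  then show ?thesis
  proof cases
    case hull
    from regular hull show ?thesis
    proof (cases rule: gap_regular_cases)
      case (gap l u)
      then show ?thesis using interpolate_conjugates_on_gap[OF g g'] gaps on_S by simp
    next
      case limit
      then have "x \<in> closure S" using closure_mono[of "S \<inter> {..x}" S] by blast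
      then show ?thesis using False by blast
    qed
  next
    case above
    have "x - \<epsilon> < x" using \<open>\<epsilon> > 0\<close> by simp
    then have "g x = x" "g' (interpolate S f x) = interpolate S f x"
      using affine_on_complement_fixed_above[OF g above] interpolate_fixed_above[OF g' above] by blast+
    then show ?thesis by simp
  next
    case below
    have "x < x + \<epsilon>" using \<open>\<epsilon> > 0\<close> by simp
    then have "g x = x" "g' (interpolate S f x) = interpolate S f x"
      using affine_on_complement_fixed_below[OF g below] interpolate_fixed_below[OF g' below] by blast+
    then show ?thesis by simp
  qed
qed

lemma conjugating_homeomorphism_exists:
  assumes "\<And>q. q \<in> Q \<Longrightarrow> affine_on_complement S (g q)" and "\<And>q. q \<in> Q \<Longrightarrow> affine_on_complement S' (g' q)"
    and "\<And>q l u. q \<in> Q \<Longrightarrow> adjacent S (<) l u \<Longrightarrow> adjacent S (<) (g q l) (g q u)"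
    and "\<And>q s. q \<in> Q \<Longrightarrow> s \<in> S \<Longrightarrow> g q s \<in> S"
    and "\<And>q s. q \<in> Q \<Longrightarrow> s \<in> S \<Longrightarrow> f (g q s) = g' q (f s)"
  shows "\<exists>h k. homeomorphism UNIV UNIV h k \<and> strict_mono h \<and> (\<forall>q\<in>Q. \<forall>x. h (g q x) = g' q (h x))"
proof -
  have "interpolate S f (g q x) = g' q (interpolate S f x)" if "q \<in> Q" for q x
  proof (rule interpolate_conjugates[OF assms(1,2)[OF that]])
    show "adjacent S (<) (g q l) (g q u)" if "adjacent S (<) l u" for l u
      using assms(3) \<open>q \<in> Q\<close> that .
    show "interpolate S f (g q s) = g' q (f s)" if "s \<in> S" for s
      using interpolate_eq[OF assms(4)[OF \<open>q \<in> Q\<close> that]] assms(5)[OF \<open>q \<in> Q\<close> that] by simp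
  qed
  then show ?thesis using strict_mono_surj_homeomorphism strict_mono_interpolate surj_interpolate by blast
qed

end

section \<open>Values of a dynamical realization\<close>

lemma enum_dom_downward_closed: "n \<in> enum_dom Q \<Longrightarrow> i \<le> n \<Longrightarrow> i \<in> enum_dom Q"
  unfolding enum_dom_def by (auto split: if_splits)

lemma Max_image_uminus:
  fixes g :: "'b \<Rightarrow> 'a::linordered_ab_group_add"
  assumes "finite A" "A \<noteq> {}"
  shows "Max ((\<lambda>x. - g x) ` A) = - Min (g ` A)"
proof -
  have "Min (g ` A) \<in> g ` A" using assms by (intro Min_in) auto
  then obtain a where "a \<in> A" "Min (g ` A) = g a" by auto
  moreover have "Min (g ` A) \<le> g x" if "x \<in> A" for x using assms that by simp
  ultimately show ?thesis using assms by (intro Max_eqI) auto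
qed

lemma Min_image_uminus:
  fixes g :: "'b \<Rightarrow> 'a::linordered_ab_group_add"
  assumes "finite A" "A \<noteq> {}"
  shows "Min ((\<lambda>x. - g x) ` A) = - Max (g ` A)"
proof -
  have "Max (g ` A) \<in> g ` A" using assms by (intro Max_in) auto
  then obtain a where "a \<in> A" "Max (g ` A) = g a" by auto
  moreover have "g x \<le> Max (g ` A)" if "x \<in> A" for x using assms that by simp
  ultimately show ?thesis using assms by (intro Min_eqI) auto
qed

locale dynamical_values =
  fixes Q :: "'a set" and lt :: "'a \<Rightarrow> 'a \<Rightarrow> bool" and e :: "nat \<Rightarrow> 'a" and v :: "nat \<Rightarrow> real"
  assumes lt_irrefl: "\<And>q. q \<in> Q \<Longrightarrow> \<not> lt q q"
    and lt_trans: "\<And>q r s. q \<in> Q \<Longrightarrow> r \<in> Q \<Longrightarrow> s \<in> Q \<Longrightarrow> lt q r \<Longrightarrow> lt r s \<Longrightarrow> lt q s"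
    and lt_total: "\<And>q r. q \<in> Q \<Longrightarrow> r \<in> Q \<Longrightarrow> q \<noteq> r \<Longrightarrow> lt q r \<or> lt r q"
    and enum: "enumeration Q e"
    and dyn_values: "dyn_values Q lt e v"
begin

lemma asym: "q \<in> Q \<Longrightarrow> r \<in> Q \<Longrightarrow> lt q r \<Longrightarrow> \<not> lt r q"
  using lt_irrefl lt_trans by blast

lemma enum_in: "i \<in> enum_dom Q \<Longrightarrow> e i \<in> Q"
  using enum unfolding enumeration_def bij_betw_def by auto

lemma enum_eq_iff: "i \<in> enum_dom Q \<Longrightarrow> j \<in> enum_dom Q \<Longrightarrow> e i = e j \<longleftrightarrow> i = j"
  using enum unfolding enumeration_def bij_betw_def inj_on_def by auto

lemma value_cases [consumes 2, case_names min max between]: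
  assumes "n \<in> enum_dom Q" and "0 < n"
  obtains (min) "\<forall>i<n. lt (e n) (e i)" "v n = Min (v ` {..<n}) - 1"
  | (max) "\<forall>i<n. lt (e i) (e n)" "v n = Max (v ` {..<n}) + 1"
  | (between) a b where "a < n" "b < n" "lt (e a) (e n)" "lt (e n) (e b)"
      "\<forall>i<n. \<not> (lt (e a) (e i) \<and> lt (e i) (e n))" "\<forall>i<n. \<not> (lt (e n) (e i) \<and> lt (e i) (e b))"
      "v n = (v a + v b) / 2"
proof -
  have "if \<forall>i<n. lt (e n) (e i) then v n = Min (v ` {..<n}) - 1
        else if \<forall>i<n. lt (e i) (e n) then v n = Max (v ` {..<n}) + 1
        else (\<exists>a<n. \<exists>b<n. lt (e a) (e n) \<and> lt (e n) (e b) \<and>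
                (\<forall>i<n. \<not> (lt (e a) (e i) \<and> lt (e i) (e n))) \<and>
                (\<forall>i<n. \<not> (lt (e n) (e i) \<and> lt (e i) (e b))) \<and>
                v n = (v a + v b) / 2)"
    using dyn_values assms unfolding dyn_values_def by blast
  then show ?thesis using that by (auto split: if_splits)
qed

lemma value_less_step:
  assumes IH: "\<And>i j. i < m \<Longrightarrow> j < m \<Longrightarrow> lt (e i) (e j) \<Longrightarrow> v i < v j"
    and "m \<in> enum_dom Q" and "i < m"
  shows "(lt (e i) (e m) \<longrightarrow> v i < v m) \<and> (lt (e m) (e i) \<longrightarrow> v m < v i)"
proof -
  have i: "i \<in> enum_dom Q" using enum_dom_downward_closed[OF assms(2)] assms(3) by simp
  have eQ: "e i \<in> Q" "e m \<in> Q" using i assms(2) enum_in by auto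
  have "0 < m" using \<open>i < m\<close> by simp
  from assms(2) this show ?thesis
  proof (cases rule: value_cases)
    case min
    have "\<not> lt (e i) (e m)" using min(1) \<open>i < m\<close> asym eQ by blast
    moreover have "Min (v ` {..<m}) \<le> v i" using \<open>i < m\<close> by simp
    ultimately show ?thesis using min(2) by simp
  next
    case max
    have "\<not> lt (e m) (e i)" using max(1) \<open>i < m\<close> asym eQ by blast
    moreover have "v i \<le> Max (v ` {..<m})" using \<open>i < m\<close> by simp
    ultimately show ?thesis using max(2) by simp
  next
    case (between a b)
    then have ab: "a \<in> enum_dom Q" "b \<in> enum_dom Q"
      using enum_dom_downward_closed[OF assms(2)] by simp_all
    then have "lt (e a) (e b)" using between(3,4) lt_trans enum_in assms(2) by blast
    then have "v a < v b" using IH between(1,2) by blast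
    have "v i \<le> v a" if "lt (e i) (e m)"
    proof (cases "i = a")
      case False
      then have "lt (e i) (e a)"
        using between(5) \<open>i < m\<close> that lt_total enum_in enum_eq_iff i ab by blast
      then show ?thesis using IH \<open>i < m\<close> between(1) by (simp add: less_imp_le)
    qed simp
    moreover have "v b \<le> v i" if "lt (e m) (e i)"
    proof (cases "i = b")
      case False
      then have "lt (e b) (e i)"
        using between(6) \<open>i < m\<close> that lt_total enum_in enum_eq_iff i ab by blast
      then show ?thesis using IH \<open>i < m\<close> between(2) by (simp add: less_imp_le)
    qed simp
    ultimately show ?thesis using \<open>v a < v b\<close> between(7) by auto
  qed
qed

lemma value_less:
  assumes "i \<in> enum_dom Q" "j \<in> enum_dom Q" and "lt (e i) (e j)"
  shows "v i < v j"
proof -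
  have upto: "\<forall>i\<le>n. \<forall>j\<le>n. lt (e i) (e j) \<longrightarrow> v i < v j" if "n \<in> enum_dom Q" for n
    using that
  proof (induction n)
    case 0
    then show ?case using lt_irrefl enum_in by auto
  next
    case (Suc n)
    have "n \<in> enum_dom Q" using enum_dom_downward_closed[OF Suc.prems] by simp
    then have IH: "\<And>i j. i < Suc n \<Longrightarrow> j < Suc n \<Longrightarrow> lt (e i) (e j) \<Longrightarrow> v i < v j"
      using Suc.IH by (simp add: less_Suc_eq_le)
    show ?case
    proof (intro allI impI)
      fix i j assume "i \<le> Suc n" "j \<le> Suc n" "lt (e i) (e j)"
      then consider "i < Suc n" "j < Suc n" | "i < Suc n" "j = Suc n" | "i = Suc n" "j < Suc n"
        | "i = Suc n" "j = Suc n" by linarith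
      then show "v i < v j"
        using IH value_less_step[OF IH Suc.prems] \<open>lt (e i) (e j)\<close> lt_irrefl enum_in Suc.prems
        by cases blast+
    qed
  qed
  have "max i j \<in> enum_dom Q" using assms(1,2) by (simp add: max_def)
  then show ?thesis using upto assms(3) by simp
qed

lemma value_less_iff: "i \<in> enum_dom Q \<Longrightarrow> j \<in> enum_dom Q \<Longrightarrow> v i < v j \<longleftrightarrow> lt (e i) (e j)"
  using value_less lt_total enum_in enum_eq_iff by (metis less_asym)

lemma dual: "dynamical_values Q (\<lambda>q r. lt r q) e (\<lambda>n. - v n)"
proof unfold_locales
  show "dyn_values Q (\<lambda>q r. lt r q) e (\<lambda>n. - v n)"
    unfolding dyn_values_def
  proof (intro ballI impI)
    fix n assume n: "n \<in> enum_dom Q" "0 < n"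
    have e0: "e 0 \<in> Q" "e n \<in> Q" using n(1) enum_in enum_dom_downward_closed[OF n(1)] by auto
    have fin: "finite {..<n}" "{..<n} \<noteq> {}" using n by auto
    from n show "if \<forall>i<n. lt (e i) (e n) then - v n = Min ((\<lambda>n. - v n) ` {..<n}) - 1
        else if \<forall>i<n. lt (e n) (e i) then - v n = Max ((\<lambda>n. - v n) ` {..<n}) + 1
        else (\<exists>a<n. \<exists>b<n. lt (e n) (e a) \<and> lt (e b) (e n) \<and>
                (\<forall>i<n. \<not> (lt (e i) (e a) \<and> lt (e n) (e i))) \<and>
                (\<forall>i<n. \<not> (lt (e i) (e n) \<and> lt (e b) (e i))) \<and>
                - v n = (- v a + - v b) / 2)"
    proof (cases rule: value_cases)
      case min
      have not_max: "\<not> (\<forall>i<n. lt (e i) (e n))" using min(1) n(2) asym e0 by blast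
      show ?thesis unfolding if_not_P[OF not_max] using min by (simp add: Max_image_uminus[OF fin])
    next
      case max
      then show ?thesis by (simp add: Min_image_uminus[OF fin])
    next
      case (between a b)
      have "a \<in> enum_dom Q" "b \<in> enum_dom Q" using between(1,2) enum_dom_downward_closed[OF n(1)] by simp_all
      then have neither: "\<not> (\<forall>i<n. lt (e i) (e n))" "\<not> (\<forall>i<n. lt (e n) (e i))"
        using between(1-4) asym enum_in e0 by blast+
      show ?thesis unfolding if_not_P[OF neither(1)] if_not_P[OF neither(2)]
        using between by (intro exI[of _ b] exI[of _ a]) auto
    qed
  qed
qed (use lt_irrefl lt_trans lt_total enum in blast)+

lemma value_exceeds_by_one:
  assumes no_max: "\<forall>i\<in>enum_dom Q. \<exists>j\<in>enum_dom Q. v i < v j" and "n \<in> enum_dom Q"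
  shows "\<exists>m\<in>enum_dom Q. v n + 1 \<le> v m"
proof -
  define c where "c = Max (v ` {..n})"
  have "c \<in> v ` {..n}" unfolding c_def by (intro Max_in) auto
  then obtain j where "j \<in> enum_dom Q" "c < v j"
    using no_max enum_dom_downward_closed[OF assms(2)] by fastforce
  \<comment> \<open>The first value above all of v 0, ..., v n is a new maximum, so it exceeds them by 1.\<close>
  then obtain m where m: "m \<in> enum_dom Q" "c < v m" and least: "\<forall>i<m. \<not> (i \<in> enum_dom Q \<and> c < v i)"
    using exists_least_iff[of "\<lambda>k. k \<in> enum_dom Q \<and> c < v k"] by blast
  have "v i \<le> c" if "i \<le> n" for i unfolding c_def using that by simp
  then have "n < m" using m(2) by (meson not_le)
  have "v i < v m" if "i < m" for i
    using least that m(2) enum_dom_downward_closed[OF m(1)] by fastforce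
  then have below: "\<forall>i<m. lt (e i) (e m)"
    using value_less_iff enum_dom_downward_closed[OF m(1)] m(1) by (simp add: less_imp_le)
  have "0 < m" using \<open>n < m\<close> by simp
  from m(1) this show ?thesis
  proof (cases rule: value_cases)
    case min
    then have "lt (e m) (e 0)" "lt (e 0) (e m)" using below \<open>0 < m\<close> by auto
    then show ?thesis using asym enum_in m(1) enum_dom_downward_closed[OF m(1)] by blast
  next
    case max
    have "v n \<le> Max (v ` {..<m})" using \<open>n < m\<close> by simp
    then show ?thesis using max(2) m(1) by force
  next
    case (between a b)
    have "b \<in> enum_dom Q" using between(2) enum_dom_downward_closed[OF m(1)] by simp
    moreover have "lt (e b) (e m)" using below between(2) by blast
    ultimately show ?thesis using between(4) asym enum_in m(1) by blast
  qed
qed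

lemma value_max_exists:
  assumes "enum_dom Q \<noteq> {}" and "bdd_above (v ` enum_dom Q)"
  shows "\<exists>m\<in>enum_dom Q. \<forall>i\<in>enum_dom Q. v i \<le> v m"
proof (rule ccontr)
  assume "\<not> ?thesis"
  then have no_max: "\<forall>i\<in>enum_dom Q. \<exists>j\<in>enum_dom Q. v i < v j" by (meson not_le)
  have "0 \<in> enum_dom Q" using assms(1) enum_dom_downward_closed by blast
  have grow: "\<exists>m\<in>enum_dom Q. v 0 + real k \<le> v m" for k
  proof (induction k)
    case 0
    then show ?case using \<open>0 \<in> enum_dom Q\<close> by auto
  next
    case (Suc k)
    then obtain n where "n \<in> enum_dom Q" "v 0 + real k \<le> v n" by blast
    moreover obtain m where "m \<in> enum_dom Q" "v n + 1 \<le> v m"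
      using value_exceeds_by_one[OF no_max \<open>n \<in> enum_dom Q\<close>] by blast
    ultimately show ?case by (intro bexI[of _ m]) auto
  qed
  obtain B where B: "\<forall>i\<in>enum_dom Q. v i \<le> B" using assms(2) by (auto simp: bdd_above_def)
  obtain k where "B - v 0 < real k" using reals_Archimedean2 by blast
  then show False using grow[of k] B by fastforce
qed

lemma value_min_exists:
  assumes "enum_dom Q \<noteq> {}" and "bdd_below (v ` enum_dom Q)"
  shows "\<exists>m\<in>enum_dom Q. \<forall>i\<in>enum_dom Q. v m \<le> v i"
proof -
  interpret dual: dynamical_values Q "\<lambda>q r. lt r q" e "\<lambda>n. - v n" by (rule dual)
  have "bdd_above ((\<lambda>n. - v n) ` enum_dom Q)" using assms(2) by (simp add: bdd_above_uminus_image)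
  then show ?thesis using dual.value_max_exists[OF assms(1)] by simp
qed


lemma first_value_between:
  assumes n: "n \<in> enum_dom Q" "c < v n" "v n < x" and first: "\<forall>i<n. \<not> (c < v i \<and> v i < x)"
    and "i0 < n" "v i0 \<le> c" and "j0 < n" "x \<le> v j0"
  obtains a b where "a < n" "b < n" "v a \<le> c" "x \<le> v b" "\<forall>i<n. v i \<le> v a \<or> v b \<le> v i"
    "v n = (v a + v b) / 2"
proof -
  have dom: "i \<in> enum_dom Q" if "i < n" for i using that enum_dom_downward_closed[OF n(1)] by simp
  have "0 < n" using \<open>i0 < n\<close> by simp
  from n(1) this show ?thesis
  proof (cases rule: value_cases)
    case min
    then have "v n < v i0" using value_less dom \<open>i0 < n\<close> n(1) by blast
    then show ?thesis using n(2) \<open>v i0 \<le> c\<close> by simp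
  next
    case max
    then have "v j0 < v n" using value_less dom \<open>j0 < n\<close> n(1) by blast
    then show ?thesis using n(3) \<open>x \<le> v j0\<close> by simp
  next
    case (between a b)
    have "v a < v n" "v n < v b" using between(1-4) value_less dom n(1) by blast+
    then have "v a \<le> c" "x \<le> v b" using first between(1,2) n(2,3) by force+
    moreover have "v i \<le> v a \<or> v b \<le> v i" if "i < n" for i
    proof (cases "lt (e i) (e n)")
      case True
      then show ?thesis using between(5) that value_less_iff dom between(1) by (meson not_le)
    next
      case False
      then have "lt (e n) (e i)" using lt_total enum_in enum_eq_iff dom that n(1) by (metis less_irrefl)
      then show ?thesis using between(6) that value_less_iff dom between(2) by (meson not_le)
    qed
    ultimately show ?thesis using that between(1,2,7) by blast
  qed
qed

lemma cut_approximable_from_below: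
  assumes "x \<notin> v ` enum_dom Q" and "b0 \<in> enum_dom Q" "x < v b0"
    and a0: "a0 \<in> enum_dom Q" "v a0 < x"
    and no_max: "\<forall>i\<in>enum_dom Q. v i < x \<longrightarrow> (\<exists>j\<in>enum_dom Q. v i < v j \<and> v j < x)"
    and "\<epsilon> > 0"
  shows "\<exists>i\<in>enum_dom Q. \<exists>j\<in>enum_dom Q. v i < x \<and> x < v j \<and> v j - v i < \<epsilon>"
proof (rule ccontr)
  assume "\<not> ?thesis"
  then have far: "\<epsilon> \<le> v j - v i"
    if "i \<in> enum_dom Q" "j \<in> enum_dom Q" "v i < x" "x < v j" for i j
    using that by force
  define A where "A = v ` {i \<in> enum_dom Q. v i < x}"
  have "A \<noteq> {}" "bdd_above A" using a0 unfolding A_def by (auto intro!: bdd_aboveI[of _ x])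
  obtain i1 where i1: "i1 \<in> enum_dom Q" "v i1 < x" "Sup A - \<epsilon> / 2 < v i1"
    using less_cSupD[OF \<open>A \<noteq> {}\<close>, of "Sup A - \<epsilon> / 2"] \<open>\<epsilon> > 0\<close> unfolding A_def by auto
  define M where "M = max i1 b0"
  have "M \<in> enum_dom Q" using i1(1) \<open>b0 \<in> enum_dom Q\<close> by (simp add: M_def max_def)
  define c where "c = Max (v ` {i. i \<le> M \<and> v i < x})"
  have i1_in: "v i1 \<in> v ` {i. i \<le> M \<and> v i < x}" using i1(2) by (auto simp: M_def)
  then have "c \<in> v ` {i. i \<le> M \<and> v i < x}" unfolding c_def by (intro Max_in) auto
  then obtain ic where ic: "ic \<le> M" "v ic < x" "v ic = c" by auto
  have "v i1 \<le> c" unfolding c_def using i1_in by simp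
  obtain j where "j \<in> enum_dom Q" "c < v j" "v j < x"
    using no_max ic enum_dom_downward_closed[OF \<open>M \<in> enum_dom Q\<close>] by force
  then obtain n where n: "n \<in> enum_dom Q" "c < v n" "v n < x"
    and first: "\<forall>i<n. \<not> (i \<in> enum_dom Q \<and> c < v i \<and> v i < x)"
    using exists_least_iff[of "\<lambda>k. k \<in> enum_dom Q \<and> c < v k \<and> v k < x"] by blast
  have "v i \<le> c" if "i \<le> M" "v i < x" for i unfolding c_def using that by simp
  then have "M < n" using n(2,3) by (meson not_le)
  then have "ic < n" "b0 < n" using ic(1) by (auto simp: M_def)
  have first': "\<forall>i<n. \<not> (c < v i \<and> v i < x)" using first enum_dom_downward_closed[OF n(1)] by simp
  \<comment> \<open>The first value inserted into (c, x) is the midpoint of c and a value beyond x. As c is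
    within \<epsilon>/2 of the supremum of the values below x, that midpoint is less than \<epsilon>/2 away
    from the value beyond x, contradicting far.\<close>
  have "v ic \<le> c" "x \<le> v b0" using ic(3) \<open>x < v b0\<close> by simp_all
  then obtain a b where ab: "a < n" "b < n" "v a \<le> c" "x \<le> v b"
    "\<forall>i<n. v i \<le> v a \<or> v b \<le> v i" "v n = (v a + v b) / 2"
    by (rule first_value_between[OF n first' \<open>ic < n\<close> _ \<open>b0 < n\<close>])
  have "c \<le> v a" using ab(5) \<open>ic < n\<close> ic(2,3) ab(4) by fastforce
  have "b \<in> enum_dom Q" using ab(2) enum_dom_downward_closed[OF n(1)] by simp
  then have "x < v b" using ab(4) assms(1) by (auto simp: order_le_less)
  then have "\<epsilon> \<le> v b - v n" using far n(1,3) \<open>b \<in> enum_dom Q\<close> by blast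
  moreover have "v n \<le> Sup A" unfolding A_def using n \<open>bdd_above A\<close> by (auto simp: A_def intro: cSup_upper)
  moreover have "2 * v n = v a + v b" using ab(6) by simp
  ultimately show False using \<open>c \<le> v a\<close> \<open>v i1 \<le> c\<close> i1(3) \<open>\<epsilon> > 0\<close> by linarith
qed

lemma cut_approximable_from_above:
  assumes "x \<notin> v ` enum_dom Q" and "b0 \<in> enum_dom Q" "x < v b0"
    and "a0 \<in> enum_dom Q" "v a0 < x"
    and no_min: "\<forall>j\<in>enum_dom Q. x < v j \<longrightarrow> (\<exists>i\<in>enum_dom Q. x < v i \<and> v i < v j)"
    and "\<epsilon> > 0"
  shows "\<exists>i\<in>enum_dom Q. \<exists>j\<in>enum_dom Q. v i < x \<and> x < v j \<and> v j - v i < \<epsilon>"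
proof -
  interpret dual: dynamical_values Q "\<lambda>q r. lt r q" e "\<lambda>n. - v n" by (rule dual)
  have "\<exists>i\<in>enum_dom Q. \<exists>j\<in>enum_dom Q. - v i < - x \<and> - x < - v j \<and> - v j - - v i < \<epsilon>"
    using assms by (intro dual.cut_approximable_from_below[of "- x" a0 b0]) force+
  then obtain i j where "i \<in> enum_dom Q" "j \<in> enum_dom Q" "x < v i" "v j < x" "v i - v j < \<epsilon>"
    by auto
  then show ?thesis by blast
qed

lemma value_cut_gap_or_limit:
  assumes "x \<notin> v ` enum_dom Q" and "b \<in> enum_dom Q" "x < v b" and "a \<in> enum_dom Q" "v a < x"
  shows "(\<exists>l u. adjacent (v ` enum_dom Q) (<) l u \<and> l < x \<and> x < u) \<or>
    x \<in> closure (v ` enum_dom Q \<inter> {..x}) \<and> x \<in> closure (v ` enum_dom Q \<inter> {x..})"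
proof (cases "(\<exists>i\<in>enum_dom Q. v i < x \<and> (\<forall>k\<in>enum_dom Q. v k < x \<longrightarrow> v k \<le> v i)) \<and>
              (\<exists>j\<in>enum_dom Q. x < v j \<and> (\<forall>k\<in>enum_dom Q. x < v k \<longrightarrow> v j \<le> v k))")
  case True
  then obtain i j where i: "i \<in> enum_dom Q" "v i < x" "\<forall>k\<in>enum_dom Q. v k < x \<longrightarrow> v k \<le> v i"
    and j: "j \<in> enum_dom Q" "x < v j" "\<forall>k\<in>enum_dom Q. x < v k \<longrightarrow> v j \<le> v k" by blast
  have "v k \<le> v i \<or> v j \<le> v k" if "k \<in> enum_dom Q" for k
    using i(3) j(3) that assms(1) by (cases "v k < x") (auto simp: not_less order_le_less)
  then have "adjacent (v ` enum_dom Q) (<) (v i) (v j)"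
    unfolding adjacent_real_iff using i j by auto
  then show ?thesis using i(2) j(2) by blast
next
  case False
  have approx: "\<exists>i\<in>enum_dom Q. \<exists>j\<in>enum_dom Q. v i < x \<and> x < v j \<and> v j - v i < \<epsilon>"
    if "\<epsilon> > 0" for \<epsilon>
  proof (cases "\<exists>i\<in>enum_dom Q. v i < x \<and> (\<forall>k\<in>enum_dom Q. v k < x \<longrightarrow> v k \<le> v i)")
    case True
    then have "\<forall>j\<in>enum_dom Q. x < v j \<longrightarrow> (\<exists>i\<in>enum_dom Q. x < v i \<and> v i < v j)"
      using False by (meson not_le)
    then show ?thesis using cut_approximable_from_above assms that by blast
  next
    case False
    then have "\<forall>i\<in>enum_dom Q. v i < x \<longrightarrow> (\<exists>j\<in>enum_dom Q. v i < v j \<and> v j < x)"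
      by (meson not_le)
    then show ?thesis using cut_approximable_from_below assms that by blast
  qed
  then have "\<exists>a\<in>v ` enum_dom Q. \<exists>b\<in>v ` enum_dom Q. a < x \<and> x < b \<and> b - a < \<epsilon>" if "\<epsilon> > 0" for \<epsilon>
    using that by blast
  then show ?thesis using squeezed_imp_two_sided_limit by blast
qed

lemma gap_regular_values: "gap_regular (v ` enum_dom Q)"
  unfolding gap_regular_def
proof (intro conjI allI impI)
  fix x
  assume below: "\<exists>s\<in>v ` enum_dom Q. s \<le> x" and above: "\<exists>s\<in>v ` enum_dom Q. x \<le> s"
  show "(\<exists>l u. adjacent (v ` enum_dom Q) (<) l u \<and> l < x \<and> x < u) \<or>
    x \<in> closure (v ` enum_dom Q \<inter> {..x}) \<and> x \<in> closure (v ` enum_dom Q \<inter> {x..})"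
  proof (cases "x \<in> v ` enum_dom Q")
    case True
    then show ?thesis using closure_subset by fastforce
  next
    case False
    then obtain a b where "a \<in> enum_dom Q" "v a < x" "b \<in> enum_dom Q" "x < v b"
      using below above by (metis imageE order_le_less)
    then show ?thesis using value_cut_gap_or_limit False by blast
  qed
next
  assume "v ` enum_dom Q \<noteq> {}" "bdd_above (v ` enum_dom Q)"
  then obtain m where "m \<in> enum_dom Q" "\<forall>i\<in>enum_dom Q. v i \<le> v m" using value_max_exists by auto
  then show "Sup (v ` enum_dom Q) \<in> v ` enum_dom Q" by (subst cSup_eq_maximum) auto
next
  assume "v ` enum_dom Q \<noteq> {}" "bdd_below (v ` enum_dom Q)"
  then obtain m where "m \<in> enum_dom Q" "\<forall>i\<in>enum_dom Q. v m \<le> v i" using value_min_exists by auto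
  then show "Inf (v ` enum_dom Q) \<in> v ` enum_dom Q" by (subst cInf_eq_minimum) auto
qed

end

section \<open>Conjugacy of dynamical realizations\<close>

lemma quandle_closed: "quandle Q qop \<Longrightarrow> r \<in> Q \<Longrightarrow> q \<in> Q \<Longrightarrow> qop r q \<in> Q"
  unfolding quandle_def by blast

lemma quandle_right_divisible:
  assumes "quandle Q qop" and "s \<in> Q" "q \<in> Q"
  obtains r where "r \<in> Q" "qop r q = s"
  using conjunct1[OF conjunct2[OF conjunct2[OF assms(1)[unfolded quandle_def]]]] assms(2,3) by blast

lemma right_order_mono:
  "right_order Q qop lt \<Longrightarrow> r \<in> Q \<Longrightarrow> s \<in> Q \<Longrightarrow> q \<in> Q \<Longrightarrow> lt r s \<Longrightarrow> lt (qop r q) (qop s q)"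
  unfolding right_order_def by blast

lemma dynamical_values_of_right_order:
  assumes "right_order Q qop lt" and "enumeration Q e" and "dyn_values Q lt e v"
  shows "dynamical_values Q lt e v"
proof unfold_locales
  show "\<And>q. q \<in> Q \<Longrightarrow> \<not> lt q q"
    and "\<And>q r s. q \<in> Q \<Longrightarrow> r \<in> Q \<Longrightarrow> s \<in> Q \<Longrightarrow> lt q r \<Longrightarrow> lt r s \<Longrightarrow> lt q s"
    and "\<And>q r. q \<in> Q \<Longrightarrow> r \<in> Q \<Longrightarrow> q \<noteq> r \<Longrightarrow> lt q r \<or> lt r q"
    using assms(1) unfolding right_order_def by blast+
qed (fact assms)+

definition dyn_embedding :: "'a set \<Rightarrow> (nat \<Rightarrow> 'a) \<Rightarrow> (nat \<Rightarrow> real) \<Rightarrow> 'a \<Rightarrow> real" where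
  "dyn_embedding Q e v q = v (the_inv_into (enum_dom Q) e q)"

definition dyn_realizes :: "'a set \<Rightarrow> ('a \<Rightarrow> 'a \<Rightarrow> 'a) \<Rightarrow> (nat \<Rightarrow> 'a) \<Rightarrow> (nat \<Rightarrow> real) \<Rightarrow> ('a \<Rightarrow> real \<Rightarrow> real) \<Rightarrow> bool"
  where "dyn_realizes Q qop e v rho \<longleftrightarrow>
    (\<forall>q\<in>Q. affine_on_complement (dyn_embedding Q e v ` Q) (rho q) \<and>
      (\<forall>r\<in>Q. rho q (dyn_embedding Q e v r) = dyn_embedding Q e v (qop r q)))"

lemma dyn_realization_iff:
  "dyn_realization Q qop lt e rho \<longleftrightarrow> (\<exists>v. dyn_values Q lt e v \<and> dyn_realizes Q qop e v rho)"
  unfolding dyn_realization_def dyn_realizes_def affine_on_complement_def Let_def dyn_embedding_def[symmetric]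
  by (simp only: conj_ac)

context dynamical_values
begin

lemma embedding_enum: "i \<in> enum_dom Q \<Longrightarrow> dyn_embedding Q e v (e i) = v i"
  using enum unfolding dyn_embedding_def enumeration_def bij_betw_def by (simp add: the_inv_into_f_f)

lemma embedding_index:
  assumes "q \<in> Q"
  obtains i where "i \<in> enum_dom Q" "e i = q" "dyn_embedding Q e v q = v i"
proof -
  have "q \<in> e ` enum_dom Q" using assms enum unfolding enumeration_def bij_betw_def by simp
  then obtain i where "i \<in> enum_dom Q" "e i = q" by blast
  then show ?thesis using that embedding_enum by blast
qed

lemma embedding_image: "dyn_embedding Q e v ` Q = v ` enum_dom Q"
proof
  show "dyn_embedding Q e v ` Q \<subseteq> v ` enum_dom Q" by (auto elim: embedding_index)
  show "v ` enum_dom Q \<subseteq> dyn_embedding Q e v ` Q" using embedding_enum enum_in by force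
qed

lemma embedding_less_iff:
  "q \<in> Q \<Longrightarrow> r \<in> Q \<Longrightarrow> dyn_embedding Q e v q < dyn_embedding Q e v r \<longleftrightarrow> lt q r"
  by (metis embedding_index value_less_iff)

lemma inj_on_embedding: "inj_on (dyn_embedding Q e v) Q"
  by (rule inj_onI) (metis embedding_less_iff lt_total less_irrefl)

lemma gap_regular_embedding_image: "gap_regular (dyn_embedding Q e v ` Q)"
  unfolding embedding_image by (rule gap_regular_values)

lemma embedding_adjacent_iff:
  "q \<in> Q \<Longrightarrow> r \<in> Q \<Longrightarrow>
    adjacent (dyn_embedding Q e v ` Q) (<) (dyn_embedding Q e v q) (dyn_embedding Q e v r) \<longleftrightarrow> adjacent Q lt q r"
  by (rule adjacent_image_iff) (simp_all add: embedding_less_iff)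


lemma right_mult_adjacent:
  assumes "quandle Q qop" and "right_order Q qop lt" and "q \<in> Q" and "adjacent Q lt r1 r2"
  shows "adjacent Q lt (qop r1 q) (qop r2 q)"
proof -
  have "Q \<subseteq> (\<lambda>r. qop r q) ` Q"
    using quandle_right_divisible[OF assms(1) _ assms(3)] by (metis image_eqI subsetI)
  then have onto: "(\<lambda>r. qop r q) ` Q = Q" using quandle_closed[OF assms(1) _ assms(3)] by blast
  have "lt (qop a q) (qop b q) \<longleftrightarrow> lt a b" if "a \<in> Q" "b \<in> Q" for a b
  proof
    assume ab: "lt (qop a q) (qop b q)"
    show "lt a b"
    proof (rule ccontr)
      assume "\<not> lt a b"
      then have "a = b \<or> lt b a" using lt_total that by blast
      then show False
        using ab right_order_mono[OF assms(2) that(2,1) assms(3)] asym lt_irrefl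
          quandle_closed[OF assms(1) _ assms(3)] that by blast
    qed
  qed (use right_order_mono[OF assms(2) that assms(3)] in blast)
  moreover have "r1 \<in> Q" "r2 \<in> Q" using assms(4) by (auto simp: adjacent_def)
  ultimately show ?thesis using assms(4) adjacent_image_iff[OF onto] by blast
qed

lemma realization_preserves_gaps:
  assumes "quandle Q qop" and "right_order Q qop lt" and "q \<in> Q"
    and g: "\<And>r. r \<in> Q \<Longrightarrow> g (dyn_embedding Q e v r) = dyn_embedding Q e v (qop r q)"
    and gap: "adjacent (dyn_embedding Q e v ` Q) (<) l u"
  shows "adjacent (dyn_embedding Q e v ` Q) (<) (g l) (g u)"
proof -
  obtain r1 r2 where r: "r1 \<in> Q" "r2 \<in> Q" "l = dyn_embedding Q e v r1" "u = dyn_embedding Q e v r2"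
    using gap by (auto simp: adjacent_def)
  then have "adjacent Q lt r1 r2" using gap embedding_adjacent_iff by simp
  then have "adjacent Q lt (qop r1 q) (qop r2 q)" by (rule right_mult_adjacent[OF assms(1-3)])
  then show ?thesis
    using embedding_adjacent_iff quandle_closed[OF assms(1) _ assms(3)] r g by simp
qed

end

lemma embeddings_order_iso_extension:
  assumes "dynamical_values Q lt e v" and "dynamical_values Q lt e' v'"
  shows "order_iso_extension (dyn_embedding Q e v ` Q) (dyn_embedding Q e' v' ` Q)
    (dyn_embedding Q e' v' \<circ> the_inv_into Q (dyn_embedding Q e v))"
proof -
  interpret d: dynamical_values Q lt e v by (fact assms(1))
  interpret d': dynamical_values Q lt e' v' by (fact assms(2))
  have inv: "the_inv_into Q (dyn_embedding Q e v) (dyn_embedding Q e v r) = r" if "r \<in> Q" for r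
    using the_inv_into_f_f[OF d.inj_on_embedding that] .
  show ?thesis
  proof
    show "gap_regular (dyn_embedding Q e v ` Q)" "gap_regular (dyn_embedding Q e' v' ` Q)"
      by (fact d.gap_regular_embedding_image d'.gap_regular_embedding_image)+
    show "strict_mono_on (dyn_embedding Q e v ` Q) (dyn_embedding Q e' v' \<circ> the_inv_into Q (dyn_embedding Q e v))"
      by (rule strict_mono_onI) (auto simp: inv d.embedding_less_iff d'.embedding_less_iff)
    show "(dyn_embedding Q e' v' \<circ> the_inv_into Q (dyn_embedding Q e v)) ` dyn_embedding Q e v ` Q =
        dyn_embedding Q e' v' ` Q"
      by (simp add: image_comp inv cong: image_cong)
  qed
qed

lemma conjugate_dyn_realizes:
  assumes "quandle Q qop" and "right_order Q qop lt"
    and d: "dynamical_values Q lt e v" and rho: "dyn_realizes Q qop e v rho"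
    and d': "dynamical_values Q lt e' v'" and rho': "dyn_realizes Q qop e' v' rho'"
  shows "\<exists>h g. homeomorphism UNIV UNIV h g \<and> strict_mono h \<and> (\<forall>q\<in>Q. \<forall>x. h (rho q x) = rho' q (h x))"
proof -
  let ?\<iota> = "dyn_embedding Q e v" and ?\<iota>' = "dyn_embedding Q e' v'"
  interpret d: dynamical_values Q lt e v by (fact d)
  interpret ext: order_iso_extension "?\<iota> ` Q" "?\<iota>' ` Q" "?\<iota>' \<circ> the_inv_into Q ?\<iota>"
    using d d' by (rule embeddings_order_iso_extension)
  have inv: "the_inv_into Q ?\<iota> (?\<iota> r) = r" if "r \<in> Q" for r
    using the_inv_into_f_f[OF d.inj_on_embedding that] .
  show ?thesis
  proof (rule ext.conjugating_homeomorphism_exists)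
    fix q assume "q \<in> Q"
    then have emb: "\<And>r. r \<in> Q \<Longrightarrow> rho q (?\<iota> r) = ?\<iota> (qop r q)" "\<And>r. r \<in> Q \<Longrightarrow> rho' q (?\<iota>' r) = ?\<iota>' (qop r q)"
      using rho rho' unfolding dyn_realizes_def by blast+
    show "affine_on_complement (?\<iota> ` Q) (rho q)" "affine_on_complement (?\<iota>' ` Q) (rho' q)"
      using rho rho' \<open>q \<in> Q\<close> unfolding dyn_realizes_def by blast+
    show "adjacent (?\<iota> ` Q) (<) (rho q l) (rho q u)" if "adjacent (?\<iota> ` Q) (<) l u" for l u
      using d.realization_preserves_gaps[OF assms(1,2) \<open>q \<in> Q\<close> emb(1) that] .
    show "rho q s \<in> ?\<iota> ` Q" "(?\<iota>' \<circ> the_inv_into Q ?\<iota>) (rho q s) = rho' q ((?\<iota>' \<circ> the_inv_into Q ?\<iota>) s)"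
      if "s \<in> ?\<iota> ` Q" for s
      using that emb quandle_closed[OF assms(1) _ \<open>q \<in> Q\<close>] inv by auto
  qed
qed

theorem lemma3p6:
  fixes Q :: "'a set" and qop :: "'a \<Rightarrow> 'a \<Rightarrow> 'a" and lt :: "'a \<Rightarrow> 'a \<Rightarrow> bool"
    and e e' :: "nat \<Rightarrow> 'a" and rho rho' :: "'a \<Rightarrow> real \<Rightarrow> real"
  assumes "quandle Q qop" and "countable Q" and "weak_latin Q qop"
    and "right_order Q qop lt"
    and "enumeration Q e" and "enumeration Q e'"
    and "dyn_realization Q qop lt e rho" and "dyn_realization Q qop lt e' rho'"
  shows "\<exists>h g. homeomorphism UNIV UNIV h g \<and> strict_mono h \<and>
           (\<forall>q\<in>Q. \<forall>x. h (rho q x) = rho' q (h x))"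
proof -
  obtain v v' where "dyn_values Q lt e v" "dyn_realizes Q qop e v rho"
    and "dyn_values Q lt e' v'" "dyn_realizes Q qop e' v' rho'"
    using assms(7,8) unfolding dyn_realization_iff by blast
  then show ?thesis
    using conjugate_dyn_realizes[OF assms(1,4)] dynamical_values_of_right_order[OF assms(4)] assms(5,6)
    by blast
qed

end
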